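(* There exists a family of species trees whose number of matching coalescent histories grows faster than exponentially in the number of taxa (leaves) $m$. In particular, for odd $m\ge 1$, the number $h_{(m-1)/2}$ of matching coalescent histories of the lodgepole species tree $\lambda_{(m-1)/2}$ (which has $m$ leaves) satisfies, as $m\to\infty$ through odd values, $$h_{(m-1)/2}\sim m!!\sim\sqrt{2}\left(\sqrt{\frac{m+1}{e}}\right)^{m+1}.$$
   Context: A species tree is a rooted binary tree whose leaves carry distinct labels. Each node $v$ of a tree $t$ has a branch directly above it: for a non-root node this is the edge joining $v$ to its parent, and the root additionally has a root branch above it. A leaf $x$ descends from a branch if $x$ lies in the subtree below that branch. A branch $b'$ is descended from a branch $b$ if the node at the lower end of $b'$ lies in the subtree below $b$. Given a species tree $t$, a matching coalescent history of $t$ is a map $h$ from the set of internal nodes of $t$ to the set of branches of $t$ such that: (a) for every leaf $x$ and internal node $k$, if $x$ descends from $k$ then $x$ descends from the branch $h(k)$; (b) for all internal nodes $k_1,k_2$, if $k_2$ is a descendant of $k_1$ then $h(k_2)$ is descended from or coincides with $h(k_1)$. The lodgepole family $(\lambda_n)_{n\ge0}$: $\lambda_0$ is the one-leaf tree, and $\lambda_{n+1}$ is obtained by attaching $\lambda_n$ and a cherry (a two-leaf tree) as the two child subtrees of a new root; $\lambda_n$ has $2n+1$ leaves. The one-leaf tree $\lambda_0$ is assigned $h_0=1$ history by convention. $m!!=m(m-2)\cdots 3\cdot1$ for odd $m$, and $\sim$ denotes asymptotic equivalence (ratio tends to $1$). *)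

theory Defs
  imports "HOL-Analysis.Analysis" "HOL-Library.Landau_Symbols"
begin

text \<open>Rooted binary tree shapes. Leaves are identified by their position
(path from the root), which plays the role of distinct leaf labels.\<close>
datatype stree = Leaf | Node stree stree

text \<open>Positions of nodes: paths from the root (False = left child, True = right child).
The branch above a node is identified with that node.\<close>
fun nodes :: "stree \<Rightarrow> bool list set" where
  "nodes Leaf = {[]}"
| "nodes (Node l r) = {[]} \<union> Cons False ` nodes l \<union> Cons True ` nodes r"

fun inodes :: "stree \<Rightarrow> bool list set" where
  "inodes Leaf = {}"
| "inodes (Node l r) = {[]} \<union> Cons False ` inodes l \<union> Cons True ` inodes r"

fun leaves :: "stree \<Rightarrow> bool list set" where
  "leaves Leaf = {[]}"
| "leaves (Node l r) = Cons False ` leaves l \<union> Cons True ` leaves r"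

definition below :: "bool list \<Rightarrow> bool list \<Rightarrow> bool" where
  "below p q \<longleftrightarrow> (\<exists>zs. q = p @ zs)"

definition matching_history :: "stree \<Rightarrow> (bool list \<Rightarrow> bool list) \<Rightarrow> bool" where
  "matching_history t h \<longleftrightarrow>
     (\<forall>k \<in> inodes t. h k \<in> nodes t) \<and>
     (\<forall>x \<in> leaves t. \<forall>k \<in> inodes t. below k x \<longrightarrow> below (h k) x) \<and>
     (\<forall>k1 \<in> inodes t. \<forall>k2 \<in> inodes t. below k1 k2 \<longrightarrow> below (h k1) (h k2))"

text \<open>Number of matching coalescent histories (maps on internal nodes,
made extensional so that each map is counted once).\<close>
definition num_histories :: "stree \<Rightarrow> nat" where
  "num_histories t = card {h. h \<in> extensional (inodes t) \<and> matching_history t h}"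

fun lodgepole :: "nat \<Rightarrow> stree" where
  "lodgepole 0 = Leaf"
| "lodgepole (Suc n) = Node (lodgepole n) (Node Leaf Leaf)"

fun dfact :: "nat \<Rightarrow> nat" where
  "dfact 0 = 1"
| "dfact (Suc 0) = 1"
| "dfact (Suc (Suc n)) = Suc (Suc n) * dfact n"

end

theory Submission
  imports Defs "HOL-Real_Asymp.Real_Asymp"
begin

text \<open>A matching history sends every internal node to a branch on the path from the root down
  to that node, so it is recorded by the depth of that branch, a labelling that is monotone along
  descent. Allowing \<open>j\<close> extra branches stacked above the root, the number of such labellings of
  \<open>Node l r\<close> is a sum over the label of the root of products of the counts for \<open>l\<close> and \<open>r\<close>.
  For the lodgepole trees this recurrence yields
  \<open>\<Sum>\<^sub>k\<^sub>\<le>\<^sub>n (2k-1)!! h\<^sub>n\<^sub>-\<^sub>k = (2n+1)!!\<close>, which traps \<open>h\<^sub>n\<close> between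
  \<open>(1 - 5/(2n+1)) (2n+1)!!\<close> and \<open>(2n+1)!!\<close>. Finally \<open>(2m-1)!! = (2m)!/(2\<^sup>m m!)\<close>, so the
  Stirling-type asymptotics of \<open>(2m-1)!!\<close> amount to the quotient of \<open>n! e\<^sup>n/(n\<^sup>n \<surd>n)\<close> at
  \<open>2m\<close> and at \<open>m\<close> tending to \<open>1\<close>; that holds because the logarithms of these quotients have
  increments \<open>O(1/n\<^sup>2)\<close> and hence converge.\<close>

section \<open>Matching histories as monotone labellings\<close>

lemma below_Nil [simp]: "below [] k"
  by (simp add: below_def)

lemma below_Cons_Cons [simp]: "below (a # x) (b # y) \<longleftrightarrow> a = b \<and> below x y"
  by (auto simp: below_def)

lemma below_Cons_Nil [simp]: "\<not> below (a # x) []"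
  by (simp add: below_def)

lemma below_trans: "below a b \<Longrightarrow> below b c \<Longrightarrow> below a c"
  by (auto simp: below_def)

lemma below_length_le: "below p q \<Longrightarrow> length p \<le> length q"
  by (auto simp: below_def)

lemma below_take_self: "below (take i k) k"
  unfolding below_def by (metis append_take_drop_id)

lemma below_take_take: "a \<le> b \<Longrightarrow> below (take a k) (take b k)"
  unfolding below_def by (metis le_add_diff_inverse take_add)

lemma below_imp_take_length: "below p k \<Longrightarrow> take (length p) k = p"
  by (auto simp: below_def)

lemma take_eq_if_below: "below k1 k2 \<Longrightarrow> i \<le> length k1 \<Longrightarrow> take i k1 = take i k2"
  by (auto simp: below_def)

lemma below_both_children_imp_below:
  assumes "below p x" "below p y" "below (k @ [False]) x" "below (k @ [True]) y"
  shows "below p k"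
proof (rule ccontr)
  assume not_below: "\<not> below p k"
  obtain u where x: "x = p @ u"
    using assms(1) unfolding below_def by blast
  obtain v where x': "x = k @ False # v"
    using assms(3) unfolding below_def by auto
  obtain u' where y: "y = p @ u'"
    using assms(2) unfolding below_def by blast
  obtain v' where y': "y = k @ True # v'"
    using assms(4) unfolding below_def by auto
  have "length k < length p"
  proof (rule ccontr)
    assume "\<not> length k < length p"
    have "p = take (length p) (k @ False # v)"
      using x x' by simp
    also have "\<dots> = take (length p) k"
      using \<open>\<not> length k < length p\<close> by simp
    finally have "k = p @ drop (length p) k"
      by (metis append_take_drop_id)
    then show False
      using not_below by (auto simp: below_def)
  qed
  then have "x ! length k = y ! length k"
    using x y by (simp add: nth_append)
  then show False
    using x' y' by simp
qed

lemma nodes_take: "k \<in> nodes t \<Longrightarrow> take i k \<in> nodes t"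
  by (induction t arbitrary: k i) (auto simp: take_Cons split: nat.splits)

lemma inodes_subset_nodes: "inodes t \<subseteq> nodes t"
  by (induction t) auto

lemma finite_inodes: "finite (inodes t)"
  by (induction t) auto

lemma leaves_nonempty: "leaves t \<noteq> {}"
  by (induction t) auto

lemma inode_has_leaf_below_child:
  "k \<in> inodes t \<Longrightarrow> \<exists>x\<in>leaves t. below (k @ [b]) x"
proof (induction t arbitrary: k)
  case (Node l r)
  from Node.prems consider "k = []"
    | (left) k' where "k = False # k'" "k' \<in> inodes l"
    | (right) k' where "k = True # k'" "k' \<in> inodes r"
    by auto
  then show ?case
  proof cases
    case 1
    obtain x y where "x \<in> leaves l" "y \<in> leaves r"
      using leaves_nonempty by blast
    then show ?thesis
      using 1 by (cases b) force+
  next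
    case left
    then obtain x where "x \<in> leaves l" "below (k' @ [b]) x"
      using Node.IH(1) by blast
    then show ?thesis
      using left by force
  next
    case right
    then obtain x where "x \<in> leaves r" "below (k' @ [b]) x"
      using Node.IH(2) by blast
    then show ?thesis
      using right by force
  qed
qed simp

lemma matching_history_below:
  assumes "matching_history t h" and "k \<in> inodes t"
  shows "below (h k) k"
proof -
  obtain x y where x: "x \<in> leaves t" "below (k @ [False]) x"
    and y: "y \<in> leaves t" "below (k @ [True]) y"
    using inode_has_leaf_below_child[OF assms(2)] by blast
  have "below k x" "below k y"
    using x(2) y(2) by (auto simp: below_def)
  then have "below (h k) x" "below (h k) y"
    using assms x(1) y(1) unfolding matching_history_def by blast+
  then show ?thesis
    using x(2) y(2) by (rule below_both_children_imp_below)
qed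

text \<open>\<open>e k\<close> is the depth of the branch assigned to \<open>k\<close>, measured from the top of a stem of \<open>j\<close>
  branches above the root; a branch on the stem or on the path to \<open>k\<close> is determined by its depth.\<close>
definition stem_labellings :: "stree \<Rightarrow> nat \<Rightarrow> (bool list \<Rightarrow> nat) set" where
  "stem_labellings t j = {e \<in> (\<Pi>\<^sub>E k\<in>inodes t. {..j + length k}).
     \<forall>k1\<in>inodes t. \<forall>k2\<in>inodes t. below k1 k2 \<longrightarrow> e k1 \<le> e k2}"

lemma finite_stem_labellings: "finite (stem_labellings t j)"
proof (rule finite_subset)
  show "stem_labellings t j \<subseteq> (\<Pi>\<^sub>E k\<in>inodes t. {..j + length k})"
    by (auto simp: stem_labellings_def)
qed (simp add: finite_PiE finite_inodes)

lemma stem_labellingsI: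
  assumes "e \<in> extensional (inodes t)"
    and "\<And>k. k \<in> inodes t \<Longrightarrow> e k \<le> j + length k"
    and "\<And>k1 k2. k1 \<in> inodes t \<Longrightarrow> k2 \<in> inodes t \<Longrightarrow> below k1 k2 \<Longrightarrow> e k1 \<le> e k2"
  shows "e \<in> stem_labellings t j"
  using assms by (auto simp: stem_labellings_def PiE_iff)

lemma stem_labellingsD:
  assumes "e \<in> stem_labellings t j"
  shows "e \<in> extensional (inodes t)"
    and "k \<in> inodes t \<Longrightarrow> e k \<le> j + length k"
    and "k1 \<in> inodes t \<Longrightarrow> k2 \<in> inodes t \<Longrightarrow> below k1 k2 \<Longrightarrow> e k1 \<le> e k2"
  using assms by (auto simp: stem_labellings_def PiE_iff)

lemma stem_labellings_Leaf: "stem_labellings Leaf j = {\<lambda>_. undefined}"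
  by (auto simp: stem_labellings_def)

lemma matching_history_of_stem_labelling:
  assumes "e \<in> stem_labellings t 0"
  shows "matching_history t (restrict (\<lambda>k. take (e k) k) (inodes t))"
  unfolding matching_history_def
proof (intro conjI ballI impI)
  fix k assume "k \<in> inodes t"
  then show "restrict (\<lambda>k. take (e k) k) (inodes t) k \<in> nodes t"
    by (simp add: nodes_take subsetD[OF inodes_subset_nodes])
next
  fix x k assume "k \<in> inodes t" "below k x"
  then show "below (restrict (\<lambda>k. take (e k) k) (inodes t) k) x"
    using below_trans[OF below_take_self] by simp
next
  fix k1 k2 assume k: "k1 \<in> inodes t" "k2 \<in> inodes t" "below k1 k2"
  have "e k1 \<le> length k1" "e k1 \<le> e k2"
    using stem_labellingsD(2,3)[OF assms] k by auto
  have "take (e k1) k1 = take (e k1) k2"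
    using k(3) \<open>e k1 \<le> length k1\<close> by (rule take_eq_if_below)
  then show "below (restrict (\<lambda>k. take (e k) k) (inodes t) k1) (restrict (\<lambda>k. take (e k) k) (inodes t) k2)"
    using k \<open>e k1 \<le> e k2\<close> by (simp add: below_take_take)
qed

lemma num_histories_eq_card_stem_labellings: "num_histories t = card (stem_labellings t 0)"
proof -
  let ?H = "{h. h \<in> extensional (inodes t) \<and> matching_history t h}"
  have hist: "take (length (h k)) k = h k" "length (h k) \<le> length k"
    if "h \<in> ?H" "k \<in> inodes t" for h k
    using matching_history_below[of t h k] that by (auto simp: below_imp_take_length below_length_le)
  have "bij_betw (\<lambda>h. restrict (\<lambda>k. length (h k)) (inodes t)) ?H (stem_labellings t 0)"
  proof (rule bij_betw_byWitness[where f' = "\<lambda>e. restrict (\<lambda>k. take (e k) k) (inodes t)"])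
    show "\<forall>h\<in>?H. restrict (\<lambda>k. take (restrict (\<lambda>k. length (h k)) (inodes t) k) k) (inodes t) = h"
      using hist by (auto intro!: extensionalityI[where A = "inodes t"])
    show "\<forall>e\<in>stem_labellings t 0. restrict (\<lambda>k. length (restrict (\<lambda>k. take (e k) k) (inodes t) k)) (inodes t) = e"
      by (auto simp: stem_labellings_def PiE_iff min_def intro!: extensionalityI[where A = "inodes t"])
    show "(\<lambda>h. restrict (\<lambda>k. length (h k)) (inodes t)) ` ?H \<subseteq> stem_labellings t 0"
      using hist by (auto simp: stem_labellings_def matching_history_def below_length_le)
    show "(\<lambda>e. restrict (\<lambda>k. take (e k) k) (inodes t)) ` stem_labellings t 0 \<subseteq> ?H"
      using matching_history_of_stem_labelling by auto
  qed
  then show ?thesis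
    unfolding num_histories_def by (rule bij_betw_same_card)
qed

lemma stem_labelling_child:
  assumes e: "e \<in> stem_labellings (Node l r) j" and s: "s = (if b then r else l)"
  shows "restrict (\<lambda>k. e (b # k) - e []) (inodes s) \<in> stem_labellings s (j - e [] + 1)"
proof -
  have child: "b # k \<in> inodes (Node l r)" if "k \<in> inodes s" for k
    using that s by (cases b) auto
  have root: "e [] \<le> j" "e [] \<le> e (b # k)" if "k \<in> inodes s" for k
    using stem_labellingsD(2,3)[OF e, of "[]"] child[OF that] by auto
  show ?thesis
  proof (rule stem_labellingsI)
    fix k assume "k \<in> inodes s"
    then show "restrict (\<lambda>k. e (b # k) - e []) (inodes s) k \<le> j - e [] + 1 + length k"
      using stem_labellingsD(2)[OF e child] root by fastforce
  next
    fix k1 k2 assume "k1 \<in> inodes s" "k2 \<in> inodes s" "below k1 k2"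
    then show "restrict (\<lambda>k. e (b # k) - e []) (inodes s) k1
        \<le> restrict (\<lambda>k. e (b # k) - e []) (inodes s) k2"
      using stem_labellingsD(3)[OF e] child by (simp add: diff_le_mono)
  qed simp
qed

definition graft_labelling ::
    "stree \<Rightarrow> stree \<Rightarrow> nat \<Rightarrow> (bool list \<Rightarrow> nat) \<Rightarrow> (bool list \<Rightarrow> nat) \<Rightarrow> bool list \<Rightarrow> nat" where
  "graft_labelling l r c el er = restrict
     (\<lambda>k. case k of [] \<Rightarrow> c | b # k' \<Rightarrow> (if b then er k' else el k') + c) (inodes (Node l r))"

lemma graft_labelling_in_stem_labellings:
  assumes "q \<le> j" and l: "el \<in> stem_labellings l (q + 1)" and r: "er \<in> stem_labellings r (q + 1)"
  shows "graft_labelling l r (j - q) el er \<in> stem_labellings (Node l r) j"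
proof (rule stem_labellingsI)
  fix k assume "k \<in> inodes (Node l r)"
  then show "graft_labelling l r (j - q) el er k \<le> j + length k"
    using \<open>q \<le> j\<close> stem_labellingsD(2)[OF l] stem_labellingsD(2)[OF r]
    by (fastforce simp: graft_labelling_def)
next
  fix k1 k2 assume "k1 \<in> inodes (Node l r)" "k2 \<in> inodes (Node l r)" "below k1 k2"
  then show "graft_labelling l r (j - q) el er k1 \<le> graft_labelling l r (j - q) el er k2"
    using stem_labellingsD(3)[OF l] stem_labellingsD(3)[OF r]
    by (cases k1; cases k2) (auto simp: graft_labelling_def)
qed (simp add: graft_labelling_def)

lemma graft_labelling_children:
  assumes "e \<in> stem_labellings (Node l r) j"
  shows "graft_labelling l r (e []) (restrict (\<lambda>k. e (False # k) - e []) (inodes l))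
    (restrict (\<lambda>k. e (True # k) - e []) (inodes r)) = e"
proof -
  have "e [] \<le> e k" if "k \<in> inodes (Node l r)" for k
    using stem_labellingsD(3)[OF assms _ that, of "[]"] by simp
  then show ?thesis
    using stem_labellingsD(1)[OF assms]
    by (intro extensionalityI[where A = "inodes (Node l r)"]) (auto simp: graft_labelling_def)
qed

lemma children_graft_labelling:
  assumes "el \<in> extensional (inodes l)" and "er \<in> extensional (inodes r)"
  shows "restrict (\<lambda>k. graft_labelling l r c el er (False # k) - c) (inodes l) = el"
    and "restrict (\<lambda>k. graft_labelling l r c el er (True # k) - c) (inodes r) = er"
proof -
  show "restrict (\<lambda>k. graft_labelling l r c el er (False # k) - c) (inodes l) = el"
    by (rule extensionalityI[OF _ assms(1)]) (auto simp: graft_labelling_def)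
  show "restrict (\<lambda>k. graft_labelling l r c el er (True # k) - c) (inodes r) = er"
    by (rule extensionalityI[OF _ assms(2)]) (auto simp: graft_labelling_def)
qed

lemma card_stem_labellings_Node:
  "card (stem_labellings (Node l r) j)
     = (\<Sum>q\<le>j. card (stem_labellings l (q + 1)) * card (stem_labellings r (q + 1)))"
proof -
  let ?B = "SIGMA q:{..j}. stem_labellings l (q + 1) \<times> stem_labellings r (q + 1)"
  let ?split = "\<lambda>e. (j - e [], restrict (\<lambda>k. e (False # k) - e []) (inodes l),
                               restrict (\<lambda>k. e (True # k) - e []) (inodes r))"
  let ?graft = "\<lambda>(q, el, er). graft_labelling l r (j - q) el er"
  have "bij_betw ?split (stem_labellings (Node l r) j) ?B"
  proof (rule bij_betw_byWitness[where f' = ?graft])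
    show "\<forall>e\<in>stem_labellings (Node l r) j. ?graft (?split e) = e"
      using stem_labellingsD(2)[of _ "Node l r" j "[]"] graft_labelling_children by auto
    show "\<forall>x\<in>?B. ?split (?graft x) = x"
    proof
      fix x assume "x \<in> ?B"
      then obtain q el er where x: "x = (q, el, er)" and "q \<le> j"
        and "el \<in> stem_labellings l (q + 1)" "er \<in> stem_labellings r (q + 1)"
        by auto
      then have "graft_labelling l r (j - q) el er [] = j - q"
        by (simp add: graft_labelling_def)
      then show "?split (?graft x) = x"
        using x \<open>q \<le> j\<close> children_graft_labelling[of el l er r "j - q"]
          stem_labellingsD(1)[OF \<open>el \<in> _\<close>] stem_labellingsD(1)[OF \<open>er \<in> _\<close>]
        by simp
    qed
    show "?split ` stem_labellings (Node l r) j \<subseteq> ?B"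
      using stem_labellingsD(2)[of _ "Node l r" j "[]"]
        stem_labelling_child[where b = False and s = l] stem_labelling_child[where b = True and s = r]
      by auto
    show "?graft ` ?B \<subseteq> stem_labellings (Node l r) j"
      using graft_labelling_in_stem_labellings by auto
  qed
  then have "card (stem_labellings (Node l r) j) = card ?B"
    by (rule bij_betw_same_card)
  also have "\<dots> = (\<Sum>q\<le>j. card (stem_labellings l (q + 1) \<times> stem_labellings r (q + 1)))"
    by (rule card_SigmaI) (auto intro: finite_stem_labellings)
  finally show ?thesis
    by (simp add: card_cartesian_product)
qed

section \<open>Lodgepole trees\<close>

fun odd_fact :: "nat \<Rightarrow> nat" where
  "odd_fact 0 = 1"
| "odd_fact (Suc k) = (2 * k + 1) * odd_fact k"

declare odd_fact.simps(2) [simp del]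

lemma odd_fact_Suc_0 [simp]: "odd_fact (Suc 0) = 1"
  by (simp add: odd_fact.simps(2))

lemma odd_fact_pos: "odd_fact n > 0"
  by (induction n) (auto simp: odd_fact.simps(2))

lemma dfact_odd_eq_odd_fact: "dfact (2 * n + 1) = odd_fact (Suc n)"
proof (induction n)
  case (Suc n)
  have "dfact (2 * Suc n + 1) = (2 * n + 3) * dfact (2 * n + 1)"
    by (simp add: numeral_eq_Suc)
  then show ?case
    using Suc.IH by (simp add: odd_fact.simps(2))
qed (simp add: odd_fact.simps(2))

fun lodgepole_count :: "nat \<Rightarrow> nat \<Rightarrow> nat" where
  "lodgepole_count 0 j = 1"
| "lodgepole_count (Suc n) j = (\<Sum>q\<le>j. (q + 2) * lodgepole_count n (q + 1))"

lemma card_stem_labellings_lodgepole: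
  "card (stem_labellings (lodgepole n) j) = lodgepole_count n j"
proof (induction n arbitrary: j)
  case 0
  then show ?case
    by (simp add: stem_labellings_Leaf)
next
  case (Suc n)
  have cherry: "card (stem_labellings (Node Leaf Leaf) q) = q + 1" for q
    by (simp add: card_stem_labellings_Node stem_labellings_Leaf)
  have "card (stem_labellings (lodgepole (Suc n)) j)
      = (\<Sum>q\<le>j. card (stem_labellings (lodgepole n) (q + 1)) * card (stem_labellings (Node Leaf Leaf) (q + 1)))"
    by (subst lodgepole.simps) (rule card_stem_labellings_Node)
  then show ?case
    by (simp add: cherry Suc.IH mult.commute)
qed

lemma num_histories_lodgepole: "num_histories (lodgepole n) = lodgepole_count n 0"
  by (simp add: num_histories_eq_card_stem_labellings card_stem_labellings_lodgepole)

lemma weighted_binomial_sum: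
  "(2 * n + 1) + (\<Sum>q\<le>j. (q + 2) * ((2 * n + q + 2) choose (2 * n)))
     = (2 * n + 1) * ((2 * n + j + 3) choose (2 * n + 2))"
proof (induction j)
  case 0
  have "(2 * n + 2) choose (2 * n) = (2 * n + 2) choose 2"
    using binomial_symmetric[of "2 * n" "2 * n + 2"] by simp
  then have "(2 * n + 2) choose (2 * n) = (n + 1) * (2 * n + 1)"
    by (simp add: choose_two)
  moreover have "(2 * n + 3) choose (2 * n + 2) = 2 * n + 3"
    using binomial_symmetric[of "2 * n + 2" "2 * n + 3"] by simp
  ultimately show ?case
    by (simp add: algebra_simps)
next
  case (Suc j)
  have pascal: "(2 * n + j + 4) choose (2 * n + 2)
      = ((2 * n + j + 3) choose (2 * n + 2)) + ((2 * n + j + 3) choose (2 * n + 1))"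
    using choose_reduce_nat[of "2 * n + j + 4" "2 * n + 2"] by (simp add: ac_simps)
  have absorb: "(2 * n + 1) * ((2 * n + j + 3) choose (2 * n + 1))
      = (j + 3) * ((2 * n + j + 3) choose (2 * n))"
    using binomial_absorb_comp[of "2 * n + j + 3" "2 * n"] binomial_absorption[of "2 * n" "2 * n + j + 3"]
    by simp
  have shift: "2 * n + Suc j + 2 = 2 * n + j + 3" "2 * n + Suc j + 3 = 2 * n + j + 4" "Suc j + 2 = j + 3"
    by simp_all
  have "(2 * n + 1) + (\<Sum>q\<le>Suc j. (q + 2) * ((2 * n + q + 2) choose (2 * n)))
      = ((2 * n + 1) + (\<Sum>q\<le>j. (q + 2) * ((2 * n + q + 2) choose (2 * n))))
        + (j + 3) * ((2 * n + j + 3) choose (2 * n))"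
    by (simp only: sum.atMost_Suc add.assoc shift)
  also have "\<dots> = (2 * n + 1) * ((2 * n + j + 4) choose (2 * n + 2))"
    by (simp only: Suc.IH pascal absorb distrib_left)
  finally show ?case
    by (simp only: shift)
qed

lemma odd_fact_convolution_lodgepole_count:
  "(\<Sum>k\<le>n. odd_fact k * lodgepole_count (n - k) j) = odd_fact n * ((2 * n + j + 1) choose (2 * n))"
proof (induction n arbitrary: j)
  case (Suc n)
  let ?S = "\<Sum>q\<le>j. (q + 2) * ((2 * n + q + 2) choose (2 * n))"
  have "(\<Sum>k\<le>Suc n. odd_fact k * lodgepole_count (Suc n - k) j)
      = (\<Sum>k\<le>n. odd_fact k * lodgepole_count (Suc (n - k)) j) + odd_fact (Suc n)"
    by (simp add: Suc_diff_le)
  also have "(\<Sum>k\<le>n. odd_fact k * lodgepole_count (Suc (n - k)) j)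
      = (\<Sum>q\<le>j. (q + 2) * (\<Sum>k\<le>n. odd_fact k * lodgepole_count (n - k) (q + 1)))"
    by (simp add: sum_distrib_left sum.swap[of _ "{..n}"] ac_simps)
  also have "\<dots> = odd_fact n * ?S"
    by (simp add: Suc.IH sum_distrib_left ac_simps)
  also have "odd_fact n * ?S + odd_fact (Suc n) = odd_fact n * ((2 * n + 1) + ?S)"
    by (simp only: odd_fact.simps(2)) (simp add: algebra_simps del: binomial_Suc_Suc)
  also have "\<dots> = odd_fact (Suc n) * ((2 * n + j + 3) choose (2 * n + 2))"
    by (simp only: weighted_binomial_sum odd_fact.simps mult.assoc mult.left_commute)
  also have "2 * n + j + 3 = 2 * Suc n + j + 1"
    by simp
  also have "2 * n + 2 = 2 * Suc n"
    by simp
  finally show ?case .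
qed simp

lemma num_histories_lodgepole_recurrence:
  "num_histories (lodgepole n) + (\<Sum>k=1..n. odd_fact k * num_histories (lodgepole (n - k)))
     = odd_fact (Suc n)"
proof -
  have "{..n} = insert 0 {1..n}"
    by auto
  then have "(\<Sum>k\<le>n. odd_fact k * lodgepole_count (n - k) 0)
      = lodgepole_count n 0 + (\<Sum>k=1..n. odd_fact k * lodgepole_count (n - k) 0)"
    by simp
  moreover have "(2 * n + 1) choose (2 * n) = 2 * n + 1"
    using binomial_symmetric[of "2 * n" "2 * n + 1"] by simp
  ultimately show ?thesis
    using odd_fact_convolution_lodgepole_count[of n 0] by (simp add: num_histories_lodgepole odd_fact.simps(2) algebra_simps)
qed

lemma num_histories_lodgepole_le: "num_histories (lodgepole n) \<le> odd_fact (Suc n)"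
  using num_histories_lodgepole_recurrence[of n] by linarith

lemma odd_fact_le_num_histories_lodgepole:
  "odd_fact (Suc n) \<le> num_histories (lodgepole n) + (\<Sum>k=1..n. odd_fact k * odd_fact (Suc n - k))"
proof -
  have "(\<Sum>k=1..n. odd_fact k * num_histories (lodgepole (n - k)))
      \<le> (\<Sum>k=1..n. odd_fact k * odd_fact (Suc n - k))"
  proof (rule sum_mono)
    fix k assume "k \<in> {1..n}"
    then have "Suc n - k = Suc (n - k)"
      by auto
    then show "odd_fact k * num_histories (lodgepole (n - k)) \<le> odd_fact k * odd_fact (Suc n - k)"
      using num_histories_lodgepole_le[of "n - k"] by simp
  qed
  then show ?thesis
    using num_histories_lodgepole_recurrence[of n] by linarith
qed

lemma odd_fact_Suc_Suc: "odd_fact (Suc (Suc m)) = (2 * m + 3) * odd_fact (Suc m)"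
  by (subst odd_fact.simps(2)) (simp add: algebra_simps)

lemma odd_fact_mult_le: "odd_fact (a + 2) * odd_fact (b + 2) \<le> 3 * odd_fact (a + b + 2)"
proof (induction b)
  case 0
  have "odd_fact (Suc (Suc 0)) = 3"
    by (simp add: odd_fact.simps(2))
  then show ?case
    by simp
next
  case (Suc b)
  have shift: "Suc b + 2 = Suc (b + 2)" "a + Suc b + 2 = Suc (a + b + 2)"
    by simp_all
  have "odd_fact (a + 2) * odd_fact (Suc b + 2) = (2 * b + 5) * (odd_fact (a + 2) * odd_fact (b + 2))"
    unfolding shift odd_fact.simps(2) by (simp add: algebra_simps)
  also have "\<dots> \<le> (2 * b + 5) * (3 * odd_fact (a + b + 2))"
    using Suc.IH by simp
  also have "\<dots> \<le> (2 * (a + b + 2) + 1) * (3 * odd_fact (a + b + 2))"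
    by (intro mult_right_mono) auto
  also have "\<dots> = 3 * odd_fact (a + Suc b + 2)"
    unfolding shift odd_fact.simps(2) by (simp add: algebra_simps)
  finally show ?case .
qed

lemma odd_fact_convolution_inner_le:
  "(\<Sum>k=2..m+1. odd_fact k * odd_fact (m + 3 - k)) \<le> m * (3 * odd_fact (m + 1))"
proof -
  have "(\<Sum>k=2..m+1. odd_fact k * odd_fact (m + 3 - k)) \<le> (\<Sum>k=2..m+1. 3 * odd_fact (m + 1))"
  proof (rule sum_mono)
    fix k assume k: "k \<in> {2..m+1}"
    define a b where "a = k - 2" and "b = m + 1 - k"
    have "k = a + 2" "m + 3 - k = b + 2" "a + b + 2 = m + 1"
      using k by (auto simp: a_def b_def)
    then show "odd_fact k * odd_fact (m + 3 - k) \<le> 3 * odd_fact (m + 1)"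
      using odd_fact_mult_le[of a b] by simp
  qed
  then show ?thesis
    by simp
qed

text \<open>The two end terms of the sum are \<open>(2n-1)!!\<close> each, and by \<open>odd_fact_mult_le\<close> each of the
  \<open>n - 2\<close> middle terms is at most \<open>3 (2n-3)!!\<close>.\<close>
lemma odd_fact_convolution_le:
  "(2 * n + 1) * (\<Sum>k=1..n. odd_fact k * odd_fact (Suc n - k)) \<le> 5 * odd_fact (Suc n)"
proof (cases "n \<ge> 2")
  case False
  then consider "n = 0" | "n = 1"
    by linarith
  then show ?thesis
    by cases (auto simp: numeral_eq_Suc odd_fact.simps(2))
next
  case True
  then obtain m where n: "n = m + 2"
    by (metis add.commute le_Suc_ex)
  then have "Suc n = m + 3"
    by simp
  have "{1..n} = insert 1 (insert n {2..m+1})"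
    using n by auto
  then have "(\<Sum>k=1..n. odd_fact k * odd_fact (Suc n - k))
      = odd_fact n + (odd_fact n + (\<Sum>k=2..m+1. odd_fact k * odd_fact (Suc n - k)))"
    using n by simp
  also have "\<dots> \<le> 2 * odd_fact n + m * (3 * odd_fact (m + 1))"
    using odd_fact_convolution_inner_le[of m] unfolding \<open>Suc n = m + 3\<close> by linarith
  finally have "(2 * n + 1) * (\<Sum>k=1..n. odd_fact k * odd_fact (Suc n - k))
      \<le> (2 * n + 1) * (2 * odd_fact n + m * (3 * odd_fact (m + 1)))"
    by (rule mult_left_mono) simp
  also have "\<dots> = (2 * m + 5) * ((7 * m + 6) * odd_fact (m + 1))"
    by (simp add: n odd_fact_Suc_Suc algebra_simps)
  also have "\<dots> \<le> (2 * m + 5) * (5 * (2 * m + 3) * odd_fact (m + 1))"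
    by (intro mult_right_mono mult_left_mono) auto
  also have "\<dots> = 5 * ((2 * n + 1) * odd_fact n)"
    by (simp add: n odd_fact_Suc_Suc algebra_simps)
  finally show ?thesis
    by (simp add: odd_fact.simps(2))
qed

lemma num_histories_lodgepole_asymp_equiv:
  "(\<lambda>n. real (num_histories (lodgepole n))) \<sim>[at_top] (\<lambda>n. real (odd_fact (Suc n)))"
proof (rule asymp_equivI', rule tendsto_sandwich)
  show "\<forall>\<^sub>F n in sequentially. 1 - 5 / (2 * real n + 1)
      \<le> real (num_histories (lodgepole n)) / real (odd_fact (Suc n))"
  proof (rule always_eventually, rule allI)
    fix n
    let ?h = "real (num_histories (lodgepole n))" and ?w = "real (odd_fact (Suc n))"
      and ?s = "real (\<Sum>k=1..n. odd_fact k * odd_fact (Suc n - k))"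
    have "?w \<le> ?h + ?s"
      unfolding of_nat_add[symmetric] of_nat_le_iff by (rule odd_fact_le_num_histories_lodgepole)
    moreover have "real ((2 * n + 1) * (\<Sum>k=1..n. odd_fact k * odd_fact (Suc n - k)))
        \<le> real (5 * odd_fact (Suc n))"
      unfolding of_nat_le_iff by (rule odd_fact_convolution_le)
    then have "?s \<le> 5 * ?w / (2 * real n + 1)"
      by (simp only: of_nat_mult of_nat_add of_nat_numeral of_nat_1) (simp add: field_simps)
    ultimately have "(1 - 5 / (2 * real n + 1)) * ?w \<le> ?h"
      by (simp add: algebra_simps)
    moreover have "?w > 0"
      using odd_fact_pos by simp
    ultimately show "1 - 5 / (2 * real n + 1) \<le> ?h / ?w"
      by (simp add: pos_le_divide_eq)
  qed
  show "\<forall>\<^sub>F n in sequentially. real (num_histories (lodgepole n)) / real (odd_fact (Suc n)) \<le> 1"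
    using num_histories_lodgepole_le odd_fact_pos by (simp add: divide_le_eq_1)
qed real_asymp+

lemma fact_le_odd_fact: "fact n \<le> odd_fact (Suc n)"
proof (induction n)
  case (Suc n)
  have "fact (Suc n) = Suc n * fact n"
    by simp
  also have "\<dots> \<le> (2 * Suc n + 1) * odd_fact (Suc n)"
    using Suc.IH by (intro mult_mono) auto
  finally show ?case
    by (simp add: odd_fact.simps(2)[of "Suc n"])
qed (simp add: odd_fact.simps(2))

lemma power_smallo_odd_fact: "(\<lambda>n. c ^ (2 * n + 1)) \<in> o(\<lambda>n. real (odd_fact (Suc n)))"
proof (rule smalloI_tendsto)
  show "\<forall>\<^sub>F n in sequentially. real (odd_fact (Suc n)) \<noteq> 0"
    using odd_fact_pos by (simp add: less_imp_neq)
  have "(\<lambda>n. inverse (fact n) * (c\<^sup>2) ^ n) \<longlonglongrightarrow> 0"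
    by (rule summable_LIMSEQ_zero[OF summable_exp])
  then have lim: "(\<lambda>n. \<bar>c\<bar> * (inverse (fact n) * (c\<^sup>2) ^ n)) \<longlonglongrightarrow> 0"
    by (rule tendsto_mult_right_zero)
  have bound: "norm (c ^ (2 * n + 1) / real (odd_fact (Suc n))) \<le> \<bar>c\<bar> * (inverse (fact n) * (c\<^sup>2) ^ n)"
    for n
  proof -
    have "(fact n :: real) \<le> real (odd_fact (Suc n))"
      using fact_le_odd_fact[of n] by (metis of_nat_fact of_nat_le_iff)
    have "norm (c ^ (2 * n + 1) / real (odd_fact (Suc n))) = \<bar>c\<bar> * (c\<^sup>2) ^ n / real (odd_fact (Suc n))"
      by (simp add: abs_mult power_abs power_mult power_add)
    also have "\<dots> \<le> \<bar>c\<bar> * (c\<^sup>2) ^ n / fact n"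
      using \<open>fact n \<le> _\<close> odd_fact_pos[of "Suc n"] by (intro divide_left_mono) auto
    finally show ?thesis
      by (simp add: divide_inverse ac_simps)
  qed
  show "(\<lambda>n. c ^ (2 * n + 1) / real (odd_fact (Suc n))) \<longlonglongrightarrow> 0"
    by (rule Lim_null_comparison[OF always_eventually[OF allI[OF bound]] lim])
qed

section \<open>Asymptotics of odd double factorials\<close>

lemma real_sqrt_power_double: "x \<ge> 0 \<Longrightarrow> sqrt x ^ (2 * k) = x ^ k"
  by (simp add: power_mult)

lemma convergent_if_summable_diff:
  fixes f :: "nat \<Rightarrow> 'a::real_normed_vector"
  assumes "summable (\<lambda>n. f (Suc n) - f n)"
  shows "convergent f"
proof -
  have "(\<lambda>n. f 0 + (\<Sum>i<n. f (Suc i) - f i)) \<longlonglongrightarrow> f 0 + (\<Sum>i. f (Suc i) - f i)"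
    by (intro tendsto_add tendsto_const summable_LIMSEQ assms)
  then show ?thesis
    by (auto simp: sum_lessThan_telescope convergent_def)
qed

lemma fact_double_eq_odd_fact: "fact (2 * m) = odd_fact m * 2 ^ m * fact m"
proof (induction m)
  case (Suc m)
  have "fact (2 * Suc m) = (2 * m + 2) * ((2 * m + 1) * fact (2 * m))"
    by (simp add: algebra_simps)
  also have "\<dots> = odd_fact (Suc m) * 2 ^ Suc m * fact (Suc m)"
    unfolding Suc.IH by (simp add: odd_fact.simps(2) algebra_simps)
  finally show ?case .
qed simp

definition stirling_ratio :: "nat \<Rightarrow> real" where
  "stirling_ratio n = fact n * exp (real n) / (real n ^ n * sqrt (real n))"

lemma stirling_ratio_double:
  assumes "m \<ge> 1"
  shows "stirling_ratio (2 * m) / stirling_ratio m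
    = real (odd_fact m) / (sqrt 2 * (2 * real m / exp 1) ^ m)"
proof -
  have fact: "(fact (2 * m) :: real) = real (odd_fact m) * 2 ^ m * fact m"
    by (metis fact_double_eq_odd_fact of_nat_fact of_nat_mult of_nat_numeral of_nat_power)
  have "exp (real (2 * m)) = exp (real m) ^ 2" "exp (real m) = exp 1 ^ m"
    by (simp_all add: exp_of_nat_mult[symmetric] power2_eq_square exp_add[symmetric])
  moreover have "real (2 * m) ^ (2 * m) = (2 ^ m * real m ^ m) ^ 2"
    by (simp add: power_mult_distrib power_mult[symmetric] mult.commute)
  moreover have "sqrt (real (2 * m)) = sqrt 2 * sqrt (real m)"
    by (simp add: real_sqrt_mult)
  ultimately show ?thesis
    using assms unfolding stirling_ratio_def fact
    by (simp add: field_simps power_mult_distrib power2_eq_square)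
qed

lemma ln_stirling_ratio_Suc_diff:
  assumes "n \<ge> 1"
  shows "ln (stirling_ratio (Suc n)) - ln (stirling_ratio n)
    = 1 - (real n + 1 / 2) * (ln (real n + 1) - ln (real n))"
proof -
  have ln_sr: "ln (stirling_ratio k) = ln (fact k) + real k - real k * ln (real k) - ln (real k) / 2"
    if "k \<ge> 1" for k
    using that by (simp add: stirling_ratio_def ln_div ln_mult ln_realpow ln_sqrt)
  have "ln (fact (Suc n) :: real) = ln (real n + 1) + ln (fact n)"
    by (simp add: ln_mult add.commute)
  then show ?thesis
    using ln_sr[OF assms] ln_sr[of "Suc n"] by (simp add: algebra_simps)
qed

lemma ln_stirling_ratio_diff_bigo:
  "(\<lambda>n. ln (stirling_ratio (Suc n)) - ln (stirling_ratio n)) \<in> O(\<lambda>n. 1 / real n ^ 2)"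
proof -
  have "(\<lambda>x::real. 1 - (x + 1 / 2) * (ln (x + 1) - ln x)) \<in> O(\<lambda>x. 1 / x ^ 2)"
    by real_asymp
  then have "(\<lambda>n. 1 - (real n + 1 / 2) * (ln (real n + 1) - ln (real n))) \<in> O(\<lambda>n. 1 / real n ^ 2)"
    by (rule landau_o.big.compose[OF _ filterlim_real_sequentially])
  moreover have ev: "\<forall>\<^sub>F n in sequentially. ln (stirling_ratio (Suc n)) - ln (stirling_ratio n)
      = 1 - (real n + 1 / 2) * (ln (real n + 1) - ln (real n))"
    using eventually_ge_at_top[of 1] by eventually_elim (rule ln_stirling_ratio_Suc_diff)
  ultimately show ?thesis
    by (simp only: landau_o.big.in_cong[OF ev])
qed

lemma convergent_ln_stirling_ratio: "convergent (\<lambda>n. ln (stirling_ratio n))"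
proof (rule convergent_if_summable_diff)
  have "summable (\<lambda>n. norm (1 / real n ^ 2))"
    using inverse_power_summable[of 2, where 'a = real] by (simp add: divide_inverse)
  then show "summable (\<lambda>n. ln (stirling_ratio (Suc n)) - ln (stirling_ratio n))"
    by (rule summable_comparison_test_bigo[OF _ ln_stirling_ratio_diff_bigo])
qed

lemma stirling_ratio_double_tendsto: "(\<lambda>m. stirling_ratio (2 * m) / stirling_ratio m) \<longlonglongrightarrow> 1"
proof -
  obtain c where c: "(\<lambda>n. ln (stirling_ratio n)) \<longlonglongrightarrow> c"
    using convergent_ln_stirling_ratio by (auto simp: convergent_def)
  have "strict_mono (\<lambda>m::nat. 2 * m)"
    by (rule strict_monoI) simp
  then have "(\<lambda>m. ln (stirling_ratio (2 * m))) \<longlonglongrightarrow> c"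
    using LIMSEQ_subseq_LIMSEQ[OF c] by (simp add: o_def)
  then have "(\<lambda>m. exp (ln (stirling_ratio (2 * m)) - ln (stirling_ratio m))) \<longlonglongrightarrow> exp (c - c)"
    by (intro tendsto_intros c)
  then have "(\<lambda>m. exp (ln (stirling_ratio (2 * m)) - ln (stirling_ratio m))) \<longlonglongrightarrow> 1"
    by simp
  moreover have "\<forall>\<^sub>F m in sequentially.
      exp (ln (stirling_ratio (2 * m)) - ln (stirling_ratio m)) = stirling_ratio (2 * m) / stirling_ratio m"
    using eventually_ge_at_top[of 1] by eventually_elim (simp add: exp_diff stirling_ratio_def)
  ultimately show ?thesis
    by (rule Lim_transform_eventually)
qed

lemma odd_fact_asymp_equiv:
  "(\<lambda>m. real (odd_fact m)) \<sim>[at_top] (\<lambda>m. sqrt 2 * (2 * real m / exp 1) ^ m)"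
proof (rule asymp_equivI')
  show "(\<lambda>m. real (odd_fact m) / (sqrt 2 * (2 * real m / exp 1) ^ m)) \<longlonglongrightarrow> 1"
    using stirling_ratio_double_tendsto
  proof (rule Lim_transform_eventually)
    show "\<forall>\<^sub>F m in sequentially. stirling_ratio (2 * m) / stirling_ratio m
        = real (odd_fact m) / (sqrt 2 * (2 * real m / exp 1) ^ m)"
      using eventually_ge_at_top[of 1] by eventually_elim (rule stirling_ratio_double)
  qed
qed

theorem corollary1:
  shows "(\<forall>c::real. (\<lambda>n. c ^ (2*n+1)) \<in> o(\<lambda>n. real (num_histories (lodgepole n))))
    \<and> (\<lambda>n. real (num_histories (lodgepole n))) \<sim>[at_top] (\<lambda>n. real (dfact (2*n+1)))
    \<and> (\<lambda>n. real (dfact (2*n+1))) \<sim>[at_top]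
        (\<lambda>n. sqrt 2 * (sqrt (real (2*n+2) / exp 1)) ^ (2*n+2))"
proof -
  note histories = num_histories_lodgepole_asymp_equiv
  have dfact: "(\<lambda>n. real (dfact (2 * n + 1))) = (\<lambda>n. real (odd_fact (Suc n)))"
    by (simp only: dfact_odd_eq_odd_fact)
  have "sqrt (real (2 * n + 2) / exp 1) ^ (2 * n + 2) = (real (2 * n + 2) / exp 1) ^ Suc n" for n
    using real_sqrt_power_double[of "real (2 * n + 2) / exp 1" "Suc n"] by simp
  then have stirling: "(\<lambda>n. real (odd_fact (Suc n)))
      \<sim>[at_top] (\<lambda>n. sqrt 2 * (sqrt (real (2 * n + 2) / exp 1)) ^ (2 * n + 2))"
    using asymp_equiv_compose'[OF odd_fact_asymp_equiv filterlim_Suc] by simp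
  have "\<forall>c::real. (\<lambda>n. c ^ (2 * n + 1)) \<in> o(\<lambda>n. real (num_histories (lodgepole n)))"
    using landau_o.small_big_trans[OF power_smallo_odd_fact
        asymp_equiv_imp_bigo[OF asymp_equiv_symI[OF histories]]] by blast
  then show ?thesis
    unfolding dfact using histories stirling by blast
qed

end
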